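(* Let $n \in \mathbb{N}$ and let $y \in L^2([0,2]^n)$. Suppose $x^\dagger \in L^2([0,1]^n)$ satisfies $[x^\dagger * x^\dagger](s) = y(s)$ for almost every $s \in [0,2]^n$. Then $x^\dagger$ and $-x^\dagger$ are the only solutions: if $x \in L^2([0,1]^n)$ satisfies $[x * x](s) = y(s)$ for almost every $s \in [0,2]^n$, then $x = x^\dagger$ almost everywhere or $x = -x^\dagger$ almost everywhere.
   Context: All functions are real-valued. $L^2([0,1]^n)$ denotes the real functions in $L^2(\mathbb{R}^n)$ whose essential support is contained in the unit cube $[0,1]^n$ (i.e. they vanish a.e. outside $[0,1]^n$); similarly for $L^2([0,2]^n)$. The convolution is $[f*g](s) = \int_{\mathbb{R}^n} f(s-t)\,g(t)\,dt$ for $s \in \mathbb{R}^n$; for $f,g \in L^2([0,1]^n)$ one has $f*g \in L^2([0,2]^n)$. *)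

theory Defs
  imports "HOL-Analysis.Analysis"
begin

definition cube :: "real \<Rightarrow> (real^'n) set" where
  "cube c = {x. \<forall>i. 0 \<le> x $ i \<and> x $ i \<le> c}"

definition L2_cube :: "real \<Rightarrow> (real^'n \<Rightarrow> real) set" where
  "L2_cube c = {f. f \<in> borel_measurable lebesgue
                 \<and> integrable lebesgue (\<lambda>x. (f x)\<^sup>2)
                 \<and> (AE x in lebesgue. x \<notin> cube c \<longrightarrow> f x = 0)}"

definition conv :: "(real^'n \<Rightarrow> real) \<Rightarrow> (real^'n \<Rightarrow> real) \<Rightarrow> real^'n \<Rightarrow> real" where
  "conv f g s = (LINT t|lebesgue. f (s - t) * g t)"

end

(*
  Pass to Borel representatives g and h of x and x^dagger; they are integrable and vanish
  outside the unit cube.  For a direction w, the moments int g(t) <w,t>^k dt of g * g are the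
  binomial convolution of those of g, so the exponential generating function of the moments of
  g * g is the square of that of g.  As g * g = h * h, the generating functions of g and h agree
  up to sign in the integral domain of formal power series.  Along a line w = a + s d every
  moment is a polynomial in s, so the sign cannot change with w: either all moments of g - h or
  all moments of g + h vanish.  A compactly supported integrable function u with vanishing
  moments satisfies int u(t) exp <w,t> dt = 0 for all w; exponential sums are dense in C(K) by
  Stone-Weierstrass, so u integrates every continuous function, hence every indicator of a
  closed set, to zero, and therefore u = 0 almost everywhere.
*)

theory Submission
  imports Defs "HOL-Computational_Algebra.Formal_Power_Series"
begin

section \<open>Translation invariance of Lebesgue measure\<close>

lemma lborel_distr_reflect:
  fixes s :: "'a::euclidean_space"
  shows "distr lborel borel (\<lambda>t. s - t) = lborel"
  using lborel_affine[of "-1" s] by (simp add: density_1)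

lemma AE_lborel_reflect:
  fixes s :: "'a::euclidean_space"
  assumes "AE r in lborel. P r"
  shows "AE t in lborel. P (s - t)"
proof -
  from assms obtain N where N: "N \<in> null_sets lborel" "{r. \<not> P r} \<subseteq> N"
    by (auto simp: eventually_ae_filter)
  have [measurable]: "(\<lambda>t. s - t) \<in> borel_measurable (lborel :: 'a measure)"
    by simp
  have "emeasure lborel ((\<lambda>t. s - t) -` N) = emeasure (distr lborel borel (\<lambda>t. s - t)) N"
    using N(1) by (subst emeasure_distr) auto
  then have "(\<lambda>t. s - t) -` N \<in> null_sets lborel"
    using N(1) measurable_sets[of "\<lambda>t. s - t" lborel borel N]
    by (auto simp: lborel_distr_reflect null_sets_def)
  then show ?thesis
    by (rule AE_I') (use N(2) in auto)
qed

lemma nn_integral_lborel_translate: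
  fixes f :: "'a::euclidean_space \<Rightarrow> ennreal"
  assumes [measurable]: "f \<in> borel_measurable borel"
  shows "(\<integral>\<^sup>+ s. f (s - t) \<partial>lborel) = (\<integral>\<^sup>+ r. f r \<partial>lborel)"
proof -
  have "(\<integral>\<^sup>+ r. f r \<partial>lborel) = (\<integral>\<^sup>+ r. f r \<partial>distr lborel borel ((+) (- t)))"
    by (simp add: lborel_distr_plus)
  also have "\<dots> = (\<integral>\<^sup>+ s. f (s - t) \<partial>lborel)"
    by (subst nn_integral_distr) auto
  finally show ?thesis ..
qed

lemma integral_lborel_translate:
  fixes f :: "'a::euclidean_space \<Rightarrow> real"
  assumes [measurable]: "f \<in> borel_measurable borel"
  shows "(\<integral> r. f (r + t) \<partial>lborel) = (\<integral> r. f r \<partial>lborel)"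
proof -
  have "(\<integral> r. f r \<partial>lborel) = (\<integral> r. f r \<partial>distr lborel borel ((+) t))"
    by (simp add: lborel_distr_plus)
  also have "\<dots> = (\<integral> r. f (r + t) \<partial>lborel)"
    by (subst integral_distr) (auto simp: add.commute)
  finally show ?thesis ..
qed

section \<open>Convolution and directional moments\<close>

definition L1_supported :: "'a::euclidean_space set \<Rightarrow> ('a \<Rightarrow> real) \<Rightarrow> bool" where
  "L1_supported K g \<longleftrightarrow>
     g \<in> borel_measurable borel \<and> integrable lborel g \<and> (\<forall>t. t \<notin> K \<longrightarrow> g t = 0)"

lemma L1_supportedD:
  assumes "L1_supported K g"
  shows "g \<in> borel_measurable borel" "integrable lborel g" "\<And>t. t \<notin> K \<Longrightarrow> g t = 0"
  using assms by (auto simp: L1_supported_def)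

lemma L1_supported_add: "L1_supported K g \<Longrightarrow> L1_supported K h \<Longrightarrow> L1_supported K (\<lambda>t. g t + h t)"
  and L1_supported_diff: "L1_supported K g \<Longrightarrow> L1_supported K h \<Longrightarrow> L1_supported K (\<lambda>t. g t - h t)"
  by (auto simp: L1_supported_def)

lemma integrable_mult_continuous_on:
  assumes u: "L1_supported K u" and K: "compact K" and f: "continuous_on K f"
  shows "integrable lborel (\<lambda>t. u t * f t)"
proof -
  note u_props = L1_supportedD[OF u]
  obtain B where "B \<ge> 0" and B: "\<And>t. t \<in> K \<Longrightarrow> \<bar>f t\<bar> \<le> B"
    using continuous_on_compact_bound[OF K f] by auto
  show ?thesis
  proof (rule Bochner_Integration.integrable_bound)
    show "integrable lborel (\<lambda>t. B * u t)"
      using u_props(2) by simp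
    have "(\<lambda>t. indicator K t *\<^sub>R f t) \<in> borel_measurable borel"
      by (rule borel_measurable_continuous_on_indicator) (use K f in \<open>auto intro: borel_compact\<close>)
    moreover have "(\<lambda>t. u t * f t) = (\<lambda>t. u t * (indicator K t *\<^sub>R f t))"
      using u_props(3) by (auto simp: indicator_def fun_eq_iff)
    ultimately show "(\<lambda>t. u t * f t) \<in> borel_measurable lborel"
      using u_props(1) by simp
    show "AE t in lborel. norm (u t * f t) \<le> norm (B * u t)"
    proof (rule AE_I2)
      fix t show "norm (u t * f t) \<le> norm (B * u t)"
        using B[of t] u_props(3)[of t] \<open>B \<ge> 0\<close>
        by (cases "t \<in> K") (auto simp: abs_mult mult_right_mono mult.commute)
    qed
  qed
qed

(* Unlike conv, this integrates over lborel: for Borel g and h the kernel is then measurable on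
   the product space, which is what Fubini's theorem needs. *)
definition convolution :: "('a::euclidean_space \<Rightarrow> real) \<Rightarrow> ('a \<Rightarrow> real) \<Rightarrow> 'a \<Rightarrow> real" where
  "convolution g h s = (\<integral> t. g (s - t) * h t \<partial>lborel)"

definition directional_moment :: "('a::euclidean_space \<Rightarrow> real) \<Rightarrow> 'a \<Rightarrow> nat \<Rightarrow> real" where
  "directional_moment g w k = (\<integral> t. g t * (w \<bullet> t) ^ k \<partial>lborel)"

lemma borel_measurable_convolution:
  assumes [measurable]: "g \<in> borel_measurable borel" "h \<in> borel_measurable borel"
  shows "convolution g h \<in> borel_measurable borel"
  unfolding convolution_def[abs_def] by measurable

lemma directional_moment_cong_AE:
  assumes [measurable]: "f \<in> borel_measurable borel" "g \<in> borel_measurable borel"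
    and "AE t in lborel. f t = g t"
  shows "directional_moment f w k = directional_moment g w k"
  unfolding directional_moment_def
  by (rule integral_cong_AE) (use assms(3) in \<open>auto elim: eventually_mono\<close>)

lemma directional_moment_add:
  assumes "L1_supported K g" "L1_supported K h" "compact K"
  shows "directional_moment (\<lambda>t. g t + h t) w k = directional_moment g w k + directional_moment h w k"
  unfolding directional_moment_def distrib_right
  by (intro Bochner_Integration.integral_add integrable_mult_continuous_on[OF assms(1,3)]
      integrable_mult_continuous_on[OF assms(2,3)] continuous_intros)

lemma directional_moment_diff:
  assumes "L1_supported K g" "L1_supported K h" "compact K"
  shows "directional_moment (\<lambda>t. g t - h t) w k = directional_moment g w k - directional_moment h w k"
  unfolding directional_moment_def left_diff_distrib
  by (intro Bochner_Integration.integral_diff integrable_mult_continuous_on[OF assms(1,3)]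
      integrable_mult_continuous_on[OF assms(2,3)] continuous_intros)

lemma integrable_convolution_kernel:
  fixes g h :: "'a::euclidean_space \<Rightarrow> real"
  assumes [measurable]: "g \<in> borel_measurable borel" "h \<in> borel_measurable borel"
    and "integrable lborel g" "integrable lborel h"
  shows "integrable (lborel \<Otimes>\<^sub>M lborel) (\<lambda>(s, t). g (s - t) * h t)"
proof (subst integrable_iff_bounded, intro conjI)
  show "(\<lambda>(s, t). g (s - t) * h t) \<in> borel_measurable (lborel \<Otimes>\<^sub>M lborel)"
    by measurable
  have "(\<integral>\<^sup>+ p. ennreal (norm (case p of (s, t) \<Rightarrow> g (s - t) * h t)) \<partial>(lborel \<Otimes>\<^sub>M lborel))
      = (\<integral>\<^sup>+ t. (\<integral>\<^sup>+ s. ennreal \<bar>g (s - t)\<bar> * ennreal \<bar>h t\<bar> \<partial>lborel) \<partial>lborel)"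
    by (subst lborel_pair.nn_integral_snd[symmetric]) (auto simp: abs_mult ennreal_mult)
  also have "\<dots> = (\<integral>\<^sup>+ t. (\<integral>\<^sup>+ r. ennreal \<bar>g r\<bar> \<partial>lborel) * ennreal \<bar>h t\<bar> \<partial>lborel)"
    by (simp add: nn_integral_multc nn_integral_lborel_translate[where f = "\<lambda>r. ennreal \<bar>g r\<bar>"])
  also have "\<dots> = (\<integral>\<^sup>+ r. ennreal \<bar>g r\<bar> \<partial>lborel) * (\<integral>\<^sup>+ t. ennreal \<bar>h t\<bar> \<partial>lborel)"
    by (simp add: nn_integral_cmult)
  also have "\<dots> < \<infinity>"
    using assms(3,4) by (simp add: integrable_iff_bounded ennreal_mult_less_top)
  finally show "(\<integral>\<^sup>+ p. ennreal (norm (case p of (s, t) \<Rightarrow> g (s - t) * h t)) \<partial>(lborel \<Otimes>\<^sub>M lborel)) < \<infinity>" .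
qed

lemma integral_translate_mult_power:
  assumes g: "L1_supported K g" and K: "compact K"
  shows "(\<integral> s. g (s - t) * (w \<bullet> s) ^ k \<partial>lborel)
       = (\<Sum>i\<le>k. of_nat (k choose i) * (w \<bullet> t) ^ (k - i) * directional_moment g w i)"
proof -
  have [measurable]: "g \<in> borel_measurable borel"
    using L1_supportedD[OF g] by simp
  have "(\<integral> s. g (s - t) * (w \<bullet> s) ^ k \<partial>lborel) = (\<integral> r. g r * (w \<bullet> (r + t)) ^ k \<partial>lborel)"
    using integral_lborel_translate[of "\<lambda>s. g (s - t) * (w \<bullet> s) ^ k" t] by simp
  also have "\<dots> = (\<integral> r. (\<Sum>i\<le>k. of_nat (k choose i) * (w \<bullet> t) ^ (k - i) * (g r * (w \<bullet> r) ^ i)) \<partial>lborel)"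
    by (simp add: inner_add_right binomial_ring sum_distrib_left mult_ac)
  also have "\<dots> = (\<Sum>i\<le>k. of_nat (k choose i) * (w \<bullet> t) ^ (k - i) * directional_moment g w i)"
    by (subst Bochner_Integration.integral_sum)
       (auto intro!: integrable_mult_continuous_on[OF g K] continuous_intros simp: directional_moment_def)
  finally show ?thesis .
qed

lemma directional_moment_convolution:
  assumes g: "L1_supported K g" and h: "L1_supported K h" and K: "compact K"
  shows "directional_moment (convolution g h) w k
       = (\<Sum>i\<le>k. of_nat (k choose i) * directional_moment g w i * directional_moment h w (k - i))"
proof -
  note g_props = L1_supportedD[OF g] and h_props = L1_supportedD[OF h]
  note [measurable] = g_props(1) h_props(1)
  define F where "F s t = g (s - t) * h t * (w \<bullet> s) ^ k" for s t
  have cont: "continuous_on {a + b |a b. a \<in> K \<and> b \<in> K} (\<lambda>s. (w \<bullet> s) ^ k)"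
    by (intro continuous_intros)
  obtain B where B: "\<And>s. s \<in> {a + b |a b. a \<in> K \<and> b \<in> K} \<Longrightarrow> \<bar>(w \<bullet> s) ^ k\<bar> \<le> B"
    using continuous_on_compact_bound[OF compact_sums[OF K K] cont] unfolding real_norm_def by blast
  have F_bound: "\<bar>F s t\<bar> \<le> \<bar>B * (g (s - t) * h t)\<bar>" for s t
  proof (cases "g (s - t) * h t = 0")
    case False
    then have "s - t \<in> K" "t \<in> K"
      using g_props(3) h_props(3) by auto
    then have "s \<in> {a + b |a b. a \<in> K \<and> b \<in> K}"
      by force
    then have "\<bar>(w \<bullet> s) ^ k\<bar> \<le> \<bar>B\<bar>"
      using B by fastforce
    from mult_right_mono[OF this, of "\<bar>g (s - t) * h t\<bar>"] show ?thesis
      by (simp add: F_def abs_mult mult_ac)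
  qed (auto simp: F_def)
  have F_int: "integrable (lborel \<Otimes>\<^sub>M lborel) (\<lambda>(s, t). F s t)"
  proof (rule Bochner_Integration.integrable_bound)
    show "integrable (lborel \<Otimes>\<^sub>M lborel) (\<lambda>p. B * (case p of (s, t) \<Rightarrow> g (s - t) * h t))"
      using integrable_convolution_kernel[OF g_props(1) h_props(1) g_props(2) h_props(2)] by auto
  qed (use F_bound in \<open>auto simp: F_def\<close>)
  have "directional_moment (convolution g h) w k = (\<integral> s. (\<integral> t. F s t \<partial>lborel) \<partial>lborel)"
    by (simp add: directional_moment_def convolution_def F_def)
  also have "\<dots> = (\<integral> t. (\<integral> s. F s t \<partial>lborel) \<partial>lborel)"
    using lborel_pair.Fubini_integral[OF F_int] by simp
  also have "\<dots> = (\<integral> t. (\<Sum>i\<le>k. of_nat (k choose i) * directional_moment g w i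
                                 * (h t * (w \<bullet> t) ^ (k - i))) \<partial>lborel)"
    by (simp add: F_def mult.commute[of _ "h _"] mult.assoc integral_translate_mult_power[OF g K]
          sum_distrib_left mult_ac)
  also have "\<dots> = (\<Sum>i\<le>k. of_nat (k choose i) * directional_moment g w i * directional_moment h w (k - i))"
    by (subst Bochner_Integration.integral_sum)
       (auto intro!: integrable_mult_continuous_on[OF h K] continuous_intros simp: directional_moment_def)
  finally show ?thesis .
qed

section \<open>Exponential generating functions\<close>

lemma fps_nth_mult_egf:
  fixes a b :: "nat \<Rightarrow> 'a::field_char_0"
  shows "fps_nth (Abs_fps (\<lambda>i. a i / fact i) * Abs_fps (\<lambda>i. b i / fact i)) k
       = (\<Sum>i\<le>k. of_nat (k choose i) * a i * b (k - i)) / fact k"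
  unfolding fps_mult_nth fps_nth_Abs_fps atLeast0AtMost sum_divide_distrib
  by (intro sum.cong refl) (simp add: binomial_fact field_simps)

lemma binomial_self_convolution_eq_imp_eq_or_neg:
  fixes a b :: "nat \<Rightarrow> 'a::field_char_0"
  assumes "\<And>k. (\<Sum>i\<le>k. of_nat (k choose i) * a i * a (k - i))
             = (\<Sum>i\<le>k. of_nat (k choose i) * b i * b (k - i))"
  shows "(\<forall>i. a i = b i) \<or> (\<forall>i. a i = - b i)"
proof -
  define A where "A = Abs_fps (\<lambda>i. a i / fact i)"
  define B where "B = Abs_fps (\<lambda>i. b i / fact i)"
  have "A * A = B * B"
    by (rule fps_ext) (simp add: A_def B_def fps_nth_mult_egf assms)
  then have "(A - B) * (A + B) = 0"
    by (simp add: algebra_simps)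
  then have "A = B \<or> A = - B"
    by (auto simp: eq_neg_iff_add_eq_0)
  then show ?thesis
    by (auto simp: A_def B_def fps_eq_iff divide_simps)
qed

section \<open>Functions with vanishing directional moments\<close>

lemma directional_moment_along_line:
  assumes u: "L1_supported K u" and K: "compact K"
  shows "directional_moment u (a + s *\<^sub>R d) k
       = (\<Sum>i\<le>k. (of_nat (k choose i) * (\<integral> t. u t * ((d \<bullet> t) ^ i * (a \<bullet> t) ^ (k - i)) \<partial>lborel)) * s ^ i)"
proof -
  have "directional_moment u (a + s *\<^sub>R d) k
      = (\<integral> t. (\<Sum>i\<le>k. (of_nat (k choose i) * s ^ i) * (u t * ((d \<bullet> t) ^ i * (a \<bullet> t) ^ (k - i)))) \<partial>lborel)"
    by (simp add: directional_moment_def inner_add_left add.commute[of "a \<bullet> _"] binomial_ring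
        sum_distrib_left power_mult_distrib mult_ac)
  also have "\<dots> = (\<Sum>i\<le>k. (of_nat (k choose i) * s ^ i) * (\<integral> t. u t * ((d \<bullet> t) ^ i * (a \<bullet> t) ^ (k - i)) \<partial>lborel))"
    by (subst Bochner_Integration.integral_sum)
       (auto intro!: integrable_mult_continuous_on[OF u K] continuous_intros)
  finally show ?thesis
    by (simp add: mult_ac)
qed

lemma finite_zeros_directional_moment_along_line:
  assumes u: "L1_supported K u" and K: "compact K"
    and nonzero: "directional_moment u (a + s\<^sub>0 *\<^sub>R d) k \<noteq> 0"
  shows "finite {s. directional_moment u (a + s *\<^sub>R d) k = 0}"
proof -
  let ?c = "\<lambda>i. of_nat (k choose i) * (\<integral> t. u t * ((d \<bullet> t) ^ i * (a \<bullet> t) ^ (k - i)) \<partial>lborel)"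
  have "\<not> (\<forall>s. (\<Sum>i\<le>k. ?c i * s ^ i) = 0)"
    using nonzero unfolding directional_moment_along_line[OF u K] by blast
  then have "\<exists>i. i \<le> k \<and> ?c i \<noteq> 0"
    unfolding polyfun_eq_0 by blast
  then show ?thesis
    unfolding directional_moment_along_line[OF u K] by (rule polyfun_rootbound_finite)
qed

lemma directional_moments_vanish_uniformly:
  assumes u: "L1_supported K u" and v: "L1_supported K v" and K: "compact K"
    and vanish: "\<And>w. (\<forall>k. directional_moment u w k = 0) \<or> (\<forall>k. directional_moment v w k = 0)"
  shows "(\<forall>w k. directional_moment u w k = 0) \<or> (\<forall>w k. directional_moment v w k = 0)"
proof (rule ccontr)
  assume "\<not> ?thesis"
  then obtain w\<^sub>0 k w\<^sub>1 j where
    u_nonzero: "directional_moment u w\<^sub>0 k \<noteq> 0" and v_nonzero: "directional_moment v w\<^sub>1 j \<noteq> 0"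
    by auto
  define d where "d = w\<^sub>1 - w\<^sub>0"
  have "finite {s. directional_moment u (w\<^sub>0 + s *\<^sub>R d) k = 0}"
    by (rule finite_zeros_directional_moment_along_line[OF u K, of _ 0]) (use u_nonzero in simp)
  moreover have "finite {s. directional_moment v (w\<^sub>0 + s *\<^sub>R d) j = 0}"
    by (rule finite_zeros_directional_moment_along_line[OF v K, of _ 1])
       (use v_nonzero in \<open>simp add: d_def\<close>)
  moreover have "UNIV \<subseteq> {s. directional_moment u (w\<^sub>0 + s *\<^sub>R d) k = 0}
                       \<union> {s. directional_moment v (w\<^sub>0 + s *\<^sub>R d) j = 0}"
    using vanish by blast
  ultimately have "finite (UNIV :: real set)"
    by (meson finite_UnI finite_subset)
  then show False
    by (simp add: infinite_UNIV_char_0)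
qed

lemma abs_sum_exp_series_le:
  fixes x :: real
  shows "\<bar>\<Sum>i<N. x ^ i / fact i\<bar> \<le> exp \<bar>x\<bar>"
proof -
  have exp_sums: "(\<lambda>i. \<bar>x\<bar> ^ i / fact i) sums exp \<bar>x\<bar>"
    using exp_converges[of "\<bar>x\<bar>"] by (simp add: divide_inverse mult.commute)
  have "\<bar>\<Sum>i<N. x ^ i / fact i\<bar> \<le> (\<Sum>i<N. \<bar>x\<bar> ^ i / fact i)"
    using sum_abs[of "\<lambda>i. x ^ i / fact i" "{..<N}"] by (simp add: power_abs)
  also have "\<dots> \<le> exp \<bar>x\<bar>"
    using sum_le_suminf[OF sums_summable[OF exp_sums], of "{..<N}"] sums_unique[OF exp_sums] by simp
  finally show ?thesis .
qed

lemma integral_mult_exp_inner_eq_0: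
  assumes u: "L1_supported K u" and K: "compact K"
    and moments: "\<And>k. directional_moment u w k = 0"
  shows "(\<integral> t. u t * exp (w \<bullet> t) \<partial>lborel) = 0"
proof -
  note u_props = L1_supportedD[OF u]
  note [measurable] = u_props(1)
  have cont: "continuous_on K (\<lambda>t. w \<bullet> t)"
    by (intro continuous_intros)
  obtain B where B: "\<And>t. t \<in> K \<Longrightarrow> \<bar>w \<bullet> t\<bar> \<le> B"
    using continuous_on_compact_bound[OF K cont] unfolding real_norm_def by blast
  define S where "S N t = u t * (\<Sum>i<N. (w \<bullet> t) ^ i / fact i)" for N t
  have "(\<lambda>N. \<integral> t. S N t \<partial>lborel) \<longlonglongrightarrow> (\<integral> t. u t * exp (w \<bullet> t) \<partial>lborel)"
  proof (rule integral_dominated_convergence[where w = "\<lambda>t. \<bar>u t\<bar> * exp B"])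
    show "integrable lborel (\<lambda>t. \<bar>u t\<bar> * exp B)"
      using u_props(2) by auto
    show "AE t in lborel. (\<lambda>N. S N t) \<longlonglongrightarrow> u t * exp (w \<bullet> t)"
      using exp_converges[of "w \<bullet> t" for t]
      by (auto simp: S_def sums_def divide_inverse mult.commute intro!: tendsto_mult_left)
    show "AE t in lborel. norm (S N t) \<le> \<bar>u t\<bar> * exp B" for N
    proof (rule AE_I2)
      fix t
      have "t \<in> K \<Longrightarrow> \<bar>\<Sum>i<N. (w \<bullet> t) ^ i / fact i\<bar> \<le> exp B"
        using abs_sum_exp_series_le[of "w \<bullet> t" N] B[of t] by (meson exp_le_cancel_iff order.trans)
      then show "norm (S N t) \<le> \<bar>u t\<bar> * exp B"
        using u_props(3)[of t] by (cases "t \<in> K") (auto simp: S_def abs_mult mult_left_mono)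
    qed
  qed (auto simp: S_def)
  moreover have "(\<integral> t. S N t \<partial>lborel) = (\<Sum>i<N. directional_moment u w i / fact i)" for N
    unfolding S_def sum_distrib_left times_divide_eq_right
    by (subst Bochner_Integration.integral_sum)
       (auto intro!: integrable_mult_continuous_on[OF u K] continuous_intros simp: directional_moment_def)
  ultimately show ?thesis
    by (simp add: moments LIMSEQ_const_iff)
qed

inductive exp_polynomial :: "('a::real_inner \<Rightarrow> real) \<Rightarrow> bool" where
  zero: "exp_polynomial (\<lambda>t. 0)"
| add_exp: "exp_polynomial q \<Longrightarrow> exp_polynomial (\<lambda>t. q t + c * exp (w \<bullet> t))"

lemma exp_polynomial_const: "exp_polynomial (\<lambda>t. c)"
  using exp_polynomial.add_exp[OF exp_polynomial.zero, of c 0] by simp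

lemma exp_polynomial_add:
  assumes "exp_polynomial q" and "exp_polynomial p"
  shows "exp_polynomial (\<lambda>t. p t + q t)"
  using assms
proof (induction rule: exp_polynomial.induct)
  case (add_exp q c w)
  then show ?case
    using exp_polynomial.add_exp[OF add_exp.IH[OF add_exp.prems], of c w] by (simp add: add.assoc)
qed simp

lemma exp_polynomial_mult_exp:
  assumes "exp_polynomial q"
  shows "exp_polynomial (\<lambda>t. q t * (c * exp (w \<bullet> t)))"
  using assms
proof (induction rule: exp_polynomial.induct)
  case zero
  show ?case
    by (simp add: exp_polynomial.zero)
next
  case (add_exp q d v)
  then show ?case
    using exp_polynomial.add_exp[OF add_exp.IH, of "d * c" "v + w"]
    by (simp add: inner_add_left exp_add algebra_simps)
qed

lemma exp_polynomial_mult: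
  assumes "exp_polynomial q" and "exp_polynomial p"
  shows "exp_polynomial (\<lambda>t. p t * q t)"
  using assms
proof (induction rule: exp_polynomial.induct)
  case zero
  show ?case
    by (simp add: exp_polynomial.zero)
next
  case (add_exp q c w)
  then show ?case
    using exp_polynomial_add[OF exp_polynomial_mult_exp[OF add_exp.prems] add_exp.IH[OF add_exp.prems]]
    by (simp add: distrib_left)
qed

lemma continuous_on_exp_polynomial: "exp_polynomial q \<Longrightarrow> continuous_on S q"
  by (induction rule: exp_polynomial.induct) (auto intro!: continuous_intros)

lemma exp_polynomial_dense:
  fixes f :: "'a::real_inner \<Rightarrow> real"
  assumes "compact K" and "continuous_on K f" and "0 < e"
  shows "\<exists>q. exp_polynomial q \<and> (\<forall>t\<in>K. \<bar>f t - q t\<bar> < e)"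
proof (rule Stone_Weierstrass_HOL[where P = exp_polynomial, OF assms(1)])
  show "\<exists>q. exp_polynomial q \<and> q x \<noteq> q y" if "x \<in> K \<and> y \<in> K \<and> x \<noteq> y" for x y
  proof (intro exI conjI)
    show "exp_polynomial (\<lambda>t. 0 + 1 * exp ((x - y) \<bullet> t))"
      by (intro exp_polynomial.intros)
    have "(x - y) \<bullet> x \<noteq> (x - y) \<bullet> y"
      using that by (metis inner_diff_right inner_eq_zero_iff right_minus_eq)
    then show "0 + 1 * exp ((x - y) \<bullet> x) \<noteq> 0 + 1 * exp ((x - y) \<bullet> y)"
      by simp
  qed
qed (auto intro: assms exp_polynomial_const continuous_on_exp_polynomial
    exp_polynomial_add exp_polynomial_mult)

lemma integral_mult_exp_polynomial_eq_0:
  assumes u: "L1_supported K u" and K: "compact K"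
    and laplace: "\<And>w. (\<integral> t. u t * exp (w \<bullet> t) \<partial>lborel) = 0"
    and q: "exp_polynomial q"
  shows "(\<integral> t. u t * q t \<partial>lborel) = 0"
  using q
proof (induction rule: exp_polynomial.induct)
  case (add_exp q c w)
  have "(\<integral> t. u t * (q t + c * exp (w \<bullet> t)) \<partial>lborel)
      = (\<integral> t. u t * q t \<partial>lborel) + c * (\<integral> t. u t * exp (w \<bullet> t) \<partial>lborel)"
    unfolding distrib_left
    by (subst Bochner_Integration.integral_add)
       (auto intro!: integrable_mult_continuous_on[OF u K] continuous_intros
         continuous_on_exp_polynomial[OF add_exp.hyps] simp: mult.left_commute[of _ c])
  then show ?case
    using add_exp.IH laplace by simp
qed simp

lemma abs_integral_mult_diff_le:
  assumes u: "L1_supported K u" and K: "compact K"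
    and f: "continuous_on K f" and g: "continuous_on K g"
    and close: "\<And>t. t \<in> K \<Longrightarrow> \<bar>f t - g t\<bar> \<le> e"
  shows "\<bar>(\<integral> t. u t * f t \<partial>lborel) - (\<integral> t. u t * g t \<partial>lborel)\<bar> \<le> e * (\<integral> t. \<bar>u t\<bar> \<partial>lborel)"
proof -
  note u_props = L1_supportedD[OF u]
  have "(\<integral> t. u t * f t \<partial>lborel) - (\<integral> t. u t * g t \<partial>lborel) = (\<integral> t. u t * (f t - g t) \<partial>lborel)"
    unfolding right_diff_distrib
    by (intro Bochner_Integration.integral_diff[symmetric] integrable_mult_continuous_on[OF u K] f g)
  also have "\<bar>\<dots>\<bar> \<le> (\<integral> t. \<bar>u t\<bar> * e \<partial>lborel)"
  proof (rule integral_abs_bound_integral)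
    show "integrable lborel (\<lambda>t. u t * (f t - g t))"
      by (intro integrable_mult_continuous_on[OF u K] continuous_intros f g)
    show "\<bar>u t * (f t - g t)\<bar> \<le> \<bar>u t\<bar> * e" for t
      using close[of t] u_props(3)[of t] by (cases "t \<in> K") (auto simp: abs_mult mult_left_mono)
  qed (use u_props(2) in auto)
  finally show ?thesis
    by (simp add: mult.commute)
qed

lemma integral_mult_continuous_eq_0:
  assumes u: "L1_supported K u" and K: "compact K"
    and laplace: "\<And>w. (\<integral> t. u t * exp (w \<bullet> t) \<partial>lborel) = 0"
    and f: "continuous_on K f"
  shows "(\<integral> t. u t * f t \<partial>lborel) = 0"
proof -
  define I where "I = (\<integral> t. \<bar>u t\<bar> \<partial>lborel)"
  have "I \<ge> 0"
    unfolding I_def by simp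
  have "\<bar>\<integral> t. u t * f t \<partial>lborel\<bar> \<le> 0 + e" if "0 < e" for e
  proof -
    obtain q where q: "exp_polynomial q" and approx: "\<And>t. t \<in> K \<Longrightarrow> \<bar>f t - q t\<bar> < e / (I + 1)"
      using exp_polynomial_dense[OF K f, of "e / (I + 1)"] \<open>0 < e\<close> \<open>I \<ge> 0\<close> by auto
    have "\<bar>\<integral> t. u t * f t \<partial>lborel\<bar> = \<bar>(\<integral> t. u t * f t \<partial>lborel) - (\<integral> t. u t * q t \<partial>lborel)\<bar>"
      using integral_mult_exp_polynomial_eq_0[OF u K laplace q] by simp
    also have "\<dots> \<le> e / (I + 1) * I"
      using abs_integral_mult_diff_le[OF u K f continuous_on_exp_polynomial[OF q] less_imp_le[OF approx]]
      by (simp add: I_def)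
    also have "\<dots> \<le> e"
      using \<open>0 < e\<close> \<open>I \<ge> 0\<close> by (simp add: field_simps)
    finally show ?thesis
      by simp
  qed
  then have "\<bar>\<integral> t. u t * f t \<partial>lborel\<bar> \<le> 0"
    by (rule field_le_epsilon)
  then show ?thesis
    by simp
qed

lemma integral_mult_indicator_closed_eq_0:
  fixes u :: "'a::euclidean_space \<Rightarrow> real"
  assumes [measurable]: "u \<in> borel_measurable borel" and u_int: "integrable lborel u"
    and continuous: "\<And>f. continuous_on UNIV f \<Longrightarrow> (\<integral> t. u t * f t \<partial>lborel) = 0"
    and C: "closed C"
  shows "(\<integral> t. u t * indicator C t \<partial>lborel) = 0"
proof (cases "C = {}")
  case False
  have [measurable]: "C \<in> sets borel"
    using C by (rule borel_closed)
  define f where "f m t = max 0 (1 - real m * infdist t C)" for m :: nat and t :: 'a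
  have f_cont: "continuous_on UNIV (f m)" for m
    unfolding f_def by (intro continuous_intros)
  have [measurable]: "f m \<in> borel_measurable borel" for m
    using f_cont by (rule borel_measurable_continuous_onI)
  have f_lim: "(\<lambda>m. f m t) \<longlonglongrightarrow> indicator C t" for t
  proof (cases "t \<in> C")
    case False
    then have "0 < infdist t C"
      using in_closed_iff_infdist_zero[OF C \<open>C \<noteq> {}\<close>] infdist_nonneg[of t C] by auto
    moreover obtain N :: nat where "1 / infdist t C \<le> N"
      using real_arch_simple by blast
    ultimately have "1 \<le> real m * infdist t C" if "N \<le> m" for m
    proof -
      have "1 \<le> real N * infdist t C"
        using \<open>0 < infdist t C\<close> \<open>1 / infdist t C \<le> N\<close> by (simp add: divide_le_eq)
      also have "\<dots> \<le> real m * infdist t C"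
        using \<open>0 < infdist t C\<close> that by (intro mult_right_mono) auto
      finally show ?thesis .
    qed
    then have "\<forall>\<^sub>F m in sequentially. 1 \<le> real m * infdist t C"
      by (auto simp: eventually_sequentially)
    then have "\<forall>\<^sub>F m in sequentially. f m t = indicator C t"
      by eventually_elim (use False in \<open>simp add: f_def\<close>)
    then show ?thesis
      by (rule tendsto_eventually)
  qed (simp add: f_def)
  have "(\<lambda>m. \<integral> t. u t * f m t \<partial>lborel) \<longlonglongrightarrow> (\<integral> t. u t * indicator C t \<partial>lborel)"
  proof (rule integral_dominated_convergence[where w = "\<lambda>t. \<bar>u t\<bar>"])
    show "AE t in lborel. (\<lambda>m. u t * f m t) \<longlonglongrightarrow> u t * indicator C t"
      by (intro AE_I2 tendsto_mult_left f_lim)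
    show "AE t in lborel. norm (u t * f m t) \<le> \<bar>u t\<bar>" for m
    proof (rule AE_I2)
      fix t
      have "\<bar>f m t\<bar> \<le> 1"
        using infdist_nonneg[of t C] by (simp add: f_def)
      then show "norm (u t * f m t) \<le> \<bar>u t\<bar>"
        by (simp add: abs_mult mult_left_le)
    qed
  qed (use u_int in auto)
  then show ?thesis
    using continuous[OF f_cont] by (simp add: LIMSEQ_const_iff)
qed simp

lemma nn_integral_pos_eq_neg_if_integral_eq_0:
  fixes v :: "'a \<Rightarrow> real"
  assumes v: "integrable M v" and zero: "integral\<^sup>L M v = 0"
  shows "(\<integral>\<^sup>+ t. ennreal (v t) \<partial>M) = (\<integral>\<^sup>+ t. ennreal (- v t) \<partial>M)"
proof -
  have norm_finite: "(\<integral>\<^sup>+ t. ennreal (norm (v t)) \<partial>M) < \<infinity>"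
    using v by (simp add: integrable_iff_bounded)
  have pos: "(\<integral>\<^sup>+ t. ennreal (v t) \<partial>M) < \<infinity>"
    by (rule le_less_trans[OF _ norm_finite]) (intro nn_integral_mono, simp)
  have neg: "(\<integral>\<^sup>+ t. ennreal (- v t) \<partial>M) < \<infinity>"
    by (rule le_less_trans[OF _ norm_finite]) (intro nn_integral_mono, simp)
  have "ennreal (enn2real (\<integral>\<^sup>+ t. ennreal (v t) \<partial>M)) = ennreal (enn2real (\<integral>\<^sup>+ t. ennreal (- v t) \<partial>M))"
    using real_lebesgue_integral_def[OF v] zero by simp
  with pos neg show ?thesis
    by (simp add: ennreal_enn2real)
qed

lemma AE_eq_0_if_integral_closed_eq_0:
  fixes u :: "'a::euclidean_space \<Rightarrow> real"
  assumes [measurable]: "u \<in> borel_measurable borel" and u_int: "integrable lborel u"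
    and closed_zero: "\<And>C. closed C \<Longrightarrow> (\<integral> t. u t * indicator C t \<partial>lborel) = 0"
  shows "AE t in lborel. u t = 0"
proof -
  define M where "M = density lborel (\<lambda>t. ennreal (u t))"
  define N where "N = density lborel (\<lambda>t. ennreal (- u t))"
  have "M = N"
  proof (rule measure_eqI_generator_eq[where E = "Collect closed" and \<Omega> = UNIV and A = "\<lambda>_. UNIV"])
    show "emeasure M C = emeasure N C" if "C \<in> Collect closed" for C
    proof -
      have [measurable]: "C \<in> sets borel"
        using that by (simp add: borel_closed)
      have "emeasure M C = (\<integral>\<^sup>+ t. ennreal (u t * indicator C t) \<partial>lborel)"
        unfolding M_def by (subst emeasure_density) (auto intro!: nn_integral_cong simp: indicator_def)
      also have "\<dots> = (\<integral>\<^sup>+ t. ennreal (- (u t * indicator C t)) \<partial>lborel)"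
        using that u_int closed_zero
        by (intro nn_integral_pos_eq_neg_if_integral_eq_0 integrable_real_mult_indicator) auto
      also have "\<dots> = emeasure N C"
        unfolding N_def by (subst emeasure_density) (auto intro!: nn_integral_cong simp: indicator_def)
      finally show ?thesis .
    qed
    have "emeasure M UNIV \<le> (\<integral>\<^sup>+ t. ennreal (norm (u t)) \<partial>lborel)"
      unfolding M_def by (subst emeasure_density) (auto intro!: nn_integral_mono)
    then show "emeasure M UNIV \<noteq> \<infinity>" for i :: nat
      using u_int by (auto simp: integrable_iff_bounded top_unique)
    show "Int_stable (Collect closed)"
      by (auto simp: Int_stable_def)
    show "sets M = sigma_sets UNIV (Collect closed)" "sets N = sigma_sets UNIV (Collect closed)"
      unfolding M_def N_def by (simp_all add: borel_eq_closed sets_measure_of)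
  qed auto
  then have "AE t in lborel. ennreal (u t) = ennreal (- u t)"
    unfolding M_def N_def by (intro sigma_finite_measure.density_unique[OF sigma_finite_lborel]) auto
  then show ?thesis
  proof eventually_elim
    fix t
    assume "ennreal (u t) = ennreal (- u t)"
    then show "u t = 0"
      by (cases "u t \<ge> 0") (auto simp: ennreal_neg)
  qed
qed

lemma AE_eq_0_if_directional_moments_eq_0:
  assumes u: "L1_supported K u" and K: "compact K"
    and moments: "\<And>w k. directional_moment u w k = 0"
  shows "AE t in lborel. u t = 0"
proof (rule AE_eq_0_if_integral_closed_eq_0)
  note u_props = L1_supportedD[OF u]
  show "u \<in> borel_measurable borel" "integrable lborel u"
    by (fact u_props(1,2))+
  have laplace: "(\<integral> t. u t * exp (w \<bullet> t) \<partial>lborel) = 0" for w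
    using integral_mult_exp_inner_eq_0[OF u K moments] .
  show "(\<integral> t. u t * indicator C t \<partial>lborel) = 0" if "closed C" for C
  proof (rule integral_mult_indicator_closed_eq_0[OF u_props(1,2) _ that])
    show "(\<integral> t. u t * f t \<partial>lborel) = 0" if "continuous_on UNIV f" for f
      using integral_mult_continuous_eq_0[OF u K laplace continuous_on_subset[OF that subset_UNIV]] .
  qed
qed

section \<open>Uniqueness of convolution square roots\<close>

lemma convolution_eq_0_outside_sums:
  assumes g: "L1_supported K g" and h: "L1_supported K h"
    and s: "s \<notin> {a + b |a b. a \<in> K \<and> b \<in> K}"
  shows "convolution g h s = 0"
proof -
  have zero: "g (s - t) * h t = 0" for t
  proof (rule ccontr)
    assume "g (s - t) * h t \<noteq> 0"
    then have "s - t \<in> K" "t \<in> K"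
      using L1_supportedD(3)[OF g] L1_supportedD(3)[OF h] by auto
    then have "s \<in> {a + b |a b. a \<in> K \<and> b \<in> K}"
      by force
    with s show False ..
  qed
  show ?thesis
    unfolding convolution_def zero by simp
qed

lemma convolution_self_eq_imp_eq_or_neg:
  assumes g: "L1_supported K g" and h: "L1_supported K h" and K: "compact K"
    and conv_eq: "AE s in lborel. convolution g g s = convolution h h s"
  shows "(AE t in lborel. g t = h t) \<or> (AE t in lborel. g t = - h t)"
proof -
  note [measurable] = L1_supportedD(1)[OF g] L1_supportedD(1)[OF h]
  have sign: "(\<forall>k. directional_moment g w k = directional_moment h w k)
      \<or> (\<forall>k. directional_moment g w k = - directional_moment h w k)" for w
  proof (rule binomial_self_convolution_eq_imp_eq_or_neg)
    fix k
    have "directional_moment (convolution g g) w k = directional_moment (convolution h h) w k"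
      using conv_eq by (intro directional_moment_cong_AE borel_measurable_convolution) auto
    then show "(\<Sum>i\<le>k. of_nat (k choose i) * directional_moment g w i * directional_moment g w (k - i))
             = (\<Sum>i\<le>k. of_nat (k choose i) * directional_moment h w i * directional_moment h w (k - i))"
      by (simp add: directional_moment_convolution[OF g g K] directional_moment_convolution[OF h h K])
  qed
  have "(\<forall>k. directional_moment (\<lambda>t. g t - h t) w k = 0)
      \<or> (\<forall>k. directional_moment (\<lambda>t. g t + h t) w k = 0)" for w
    using sign[of w] by (auto simp: directional_moment_diff[OF g h K] directional_moment_add[OF g h K])
  then have "(\<forall>w k. directional_moment (\<lambda>t. g t - h t) w k = 0)
           \<or> (\<forall>w k. directional_moment (\<lambda>t. g t + h t) w k = 0)"
    by (rule directional_moments_vanish_uniformly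
        [OF L1_supported_diff[OF g h] L1_supported_add[OF g h] K])
  then show ?thesis
  proof (elim disjE)
    assume "\<forall>w k. directional_moment (\<lambda>t. g t - h t) w k = 0"
    then have "AE t in lborel. g t - h t = 0"
      using AE_eq_0_if_directional_moments_eq_0[OF L1_supported_diff[OF g h] K] by blast
    then show ?thesis
      by (auto elim: eventually_mono)
  next
    assume "\<forall>w k. directional_moment (\<lambda>t. g t + h t) w k = 0"
    then have "AE t in lborel. g t + h t = 0"
      using AE_eq_0_if_directional_moments_eq_0[OF L1_supported_add[OF g h] K] by blast
    then show ?thesis
      by (auto simp: eq_neg_iff_add_eq_0 elim: eventually_mono)
  qed
qed

lemma compact_cube: "compact (cube c :: (real^'n) set)"
proof -
  have "cube c = cbox (0 :: real^'n) (vec c)"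
    by (auto simp: cube_def mem_box_cart)
  then show ?thesis
    by simp
qed

lemma sums_cube_subset: "{a + b |a b. a \<in> cube 1 \<and> b \<in> cube 1} \<subseteq> (cube 2 :: (real^'n) set)"
proof clarify
  fix a b :: "real^'n"
  assume "a \<in> cube 1" "b \<in> cube 1"
  have "0 \<le> (a + b) $ i \<and> (a + b) $ i \<le> 2" for i
  proof -
    have "0 \<le> a $ i" "a $ i \<le> 1" "0 \<le> b $ i" "b $ i \<le> 1"
      using \<open>a \<in> cube 1\<close> \<open>b \<in> cube 1\<close> by (auto simp: cube_def)
    then show ?thesis
      by simp
  qed
  then show "a + b \<in> cube 2"
    by (simp add: cube_def)
qed

lemma convolution_eq_0_outside_cube:
  assumes "L1_supported (cube 1) g" and "L1_supported (cube 1) h" and "s \<notin> cube 2"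
  shows "convolution g h s = 0"
  using assms sums_cube_subset by (blast intro: convolution_eq_0_outside_sums)

lemma conv_eq_convolution:
  fixes x z g h :: "real^'n \<Rightarrow> real"
  assumes "x \<in> borel_measurable lebesgue" and "z \<in> borel_measurable lebesgue"
    and [measurable]: "g \<in> borel_measurable borel" "h \<in> borel_measurable borel"
    and xg: "AE t in lborel. x t = g t" and zh: "AE t in lborel. z t = h t"
  shows "conv x z s = convolution g h s"
proof -
  have ae: "AE t in lborel. x (s - t) * z t = g (s - t) * h t"
    using AE_lborel_reflect[OF xg, of s] zh by eventually_elim simp
  have g_meas: "(\<lambda>t. g (s - t) * h t) \<in> borel_measurable lebesgue"
    by (intro measurable_completion) measurable
  have x_meas: "(\<lambda>t. x (s - t) * z t) \<in> borel_measurable lebesgue"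
    by (rule borel_measurable_AE[OF g_meas]) (use ae in \<open>auto intro: AE_completion\<close>)
  have "conv x z s = (\<integral> t. g (s - t) * h t \<partial>lebesgue)"
    unfolding conv_def
    by (rule integral_cong_AE[OF x_meas g_meas]) (use ae in \<open>auto intro: AE_completion\<close>)
  also have "\<dots> = convolution g h s"
    unfolding convolution_def by (rule integral_completion) measurable
  finally show ?thesis .
qed

lemma L2_cube_representative:
  fixes x :: "real^'n \<Rightarrow> real"
  assumes "x \<in> L2_cube c"
  obtains g where "L1_supported (cube c) g" "AE t in lborel. x t = g t"
    "\<And>s. conv x x s = convolution g g s"
proof -
  from assms have x_meas: "x \<in> borel_measurable lebesgue"
    and x_sq: "integrable lebesgue (\<lambda>t. (x t)\<^sup>2)"
    and x_supp: "AE t in lebesgue. t \<notin> cube c \<longrightarrow> x t = 0"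
    by (auto simp: L2_cube_def)
  obtain g\<^sub>0 where [measurable]: "g\<^sub>0 \<in> borel_measurable borel" and xg\<^sub>0: "AE t in lborel. x t = g\<^sub>0 t"
    using completion_ex_borel_measurable_real[OF x_meas] by auto
  define g where "g t = indicator (cube c) t * g\<^sub>0 t" for t
  have [measurable]: "cube c \<in> sets (borel :: (real^'n) measure)"
    by (simp add: borel_compact compact_cube)
  have g_meas: "g \<in> borel_measurable borel"
    unfolding g_def[abs_def] by measurable
  have "AE t in lborel. t \<notin> cube c \<longrightarrow> x t = 0"
    using x_supp by (simp add: AE_completion_iff)
  with xg\<^sub>0 have xg: "AE t in lborel. x t = g t"
    by eventually_elim (auto simp: g_def)
  have "integrable lebesgue (\<lambda>t. (g\<^sub>0 t)\<^sup>2)"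
    by (rule integrable_cong_AE_imp[OF x_sq])
       (use xg\<^sub>0 in \<open>auto intro: AE_completion measurable_completion\<close>)
  then have int_bound: "integrable lborel (\<lambda>t. indicator (cube c) t + (g\<^sub>0 t)\<^sup>2)"
    using emeasure_bounded_finite[OF compact_imp_bounded[OF compact_cube]]
    by (intro Bochner_Integration.integrable_add integrable_real_indicator)
       (auto simp: integrable_completion less_top)
  have bound: "norm (g t) \<le> norm (indicator (cube c) t + (g\<^sub>0 t)\<^sup>2)" for t
  proof -
    have "\<bar>a\<bar> \<le> 1 + a\<^sup>2" for a :: real
      using zero_le_power2[of "\<bar>a\<bar> - 1"] abs_ge_zero[of a]
      unfolding power2_diff power2_abs power_one mult_1_right by linarith
    then show ?thesis
      by (auto simp: g_def indicator_def)
  qed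
  have "integrable lborel g"
    by (rule Bochner_Integration.integrable_bound[OF int_bound _ AE_I2[OF bound]]) (use g_meas in simp)
  then have "L1_supported (cube c) g"
    using g_meas by (auto simp: L1_supported_def g_def)
  then show ?thesis
    by (rule that[OF _ xg conv_eq_convolution[OF x_meas x_meas g_meas g_meas xg xg]])
qed

theorem theorem3p2:
  fixes y xd x :: "real^'n \<Rightarrow> real"
  assumes "y \<in> L2_cube 2"
    and "xd \<in> L2_cube 1"
    and "AE s in lebesgue. s \<in> cube 2 \<longrightarrow> conv xd xd s = y s"
    and "x \<in> L2_cube 1"
    and "AE s in lebesgue. s \<in> cube 2 \<longrightarrow> conv x x s = y s"
  shows "(AE s in lebesgue. x s = xd s) \<or> (AE s in lebesgue. x s = - xd s)"
proof -
  obtain g where g: "L1_supported (cube 1) g" and xg: "AE t in lborel. x t = g t"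
    and conv_x: "\<And>s. conv x x s = convolution g g s"
    using L2_cube_representative[OF assms(4)] by blast
  obtain h where h: "L1_supported (cube 1) h" and xdh: "AE t in lborel. xd t = h t"
    and conv_xd: "\<And>s. conv xd xd s = convolution h h s"
    using L2_cube_representative[OF assms(2)] by blast
  have "AE s in lborel. convolution g g s = convolution h h s"
    using assms(3,5) unfolding AE_completion_iff
    by eventually_elim
      (metis conv_x conv_xd convolution_eq_0_outside_cube[OF g g] convolution_eq_0_outside_cube[OF h h])
  then consider "AE t in lborel. g t = h t" | "AE t in lborel. g t = - h t"
    using convolution_self_eq_imp_eq_or_neg[OF g h compact_cube] by blast
  then show ?thesis
  proof cases
    case 1
    with xg xdh have "AE t in lborel. x t = xd t"
      by eventually_elim simp
    then show ?thesis
      by (simp add: AE_completion_iff)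
  next
    case 2
    with xg xdh have "AE t in lborel. x t = - xd t"
      by eventually_elim simp
    then show ?thesis
      by (simp add: AE_completion_iff)
  qed
qed

end
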